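(* For every instance, the algorithm GC described in the context, given the pseudometric $d$, outputs (for any tie-breaking) a clustering that is $5$-FJR with respect to the centroid loss $\ell_i(C,x)=d(i,x)$.
   Context: Instance: finite nonempty set $\mathcal{N}$ of $n$ agents, finite nonempty set $\mathcal{M}$ of feasible centers, positive integer $k$, pseudometric $d$ on $\mathcal{N}\cup\mathcal{M}$. A clustering is $\mathcal{X}=\{(C_1,x_1),\dots,(C_k,x_k)\}$ with $C_t$ pairwise disjoint (some possibly empty), union $\mathcal{N}$, $x_t\in\mathcal{M}$; $\ell_i(\mathcal{X})=\ell_i(C_t,x_t)$ where $i\in C_t$. For $\alpha\ge1$, $\mathcal{X}$ is $\alpha$-FJR (with respect to losses $\ell_i$) if there is no $S\subseteq\mathcal{N}$ with $|S|\ge n/k$ and $y\in\mathcal{M}$ with $\alpha\,\ell_i(S,y)<\min_{j\in S}\ell_j(\mathcal{X})$ for all $i\in S$. Algorithm GC: maintain a set $U$ of uncaptured agents (initially $\mathcal{N}$) and a parameter $\delta$ increasing continuously from $0$. Whenever there exist an agent $i\in U$ and a set $C\subseteq U$ with $|C|\ge\min(|U|,n/k)$ and $d(i,i')\le\delta$ for all $i'\in C$, form the cluster $(C,x)$ with $x\in\arg\min_{x'\in\mathcal{M}}d(i,x')$ and set $U\leftarrow U\setminus C$. Stop when $U=\emptyset$; output the formed clusters (padded with empty clusters to $k$). *)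

theory Defs
  imports Main "HOL.Real"
begin

definition pseudometric_on :: "'a set \<Rightarrow> ('a \<Rightarrow> 'a \<Rightarrow> real) \<Rightarrow> bool" where
  "pseudometric_on A d \<longleftrightarrow>
     (\<forall>x\<in>A. d x x = 0) \<and>
     (\<forall>x\<in>A. \<forall>y\<in>A. d x y \<ge> 0) \<and>
     (\<forall>x\<in>A. \<forall>y\<in>A. d x y = d y x) \<and>
     (\<forall>x\<in>A. \<forall>y\<in>A. \<forall>z\<in>A. d x z \<le> d x y + d y z)"

definition is_clustering :: "'a set \<Rightarrow> 'a set \<Rightarrow> nat \<Rightarrow> ('a set \<times> 'a) list \<Rightarrow> bool" where
  "is_clustering N M k X \<longleftrightarrow>
     length X = k \<and>
     (\<forall>t<length X. \<forall>s<length X. t \<noteq> s \<longrightarrow> fst (X!t) \<inter> fst (X!s) = {}) \<and>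
     (\<Union>t<length X. fst (X!t)) = N \<and>
     (\<forall>t<length X. snd (X!t) \<in> M)"

definition agent_loss :: "('a \<Rightarrow> 'a set \<Rightarrow> 'a \<Rightarrow> real) \<Rightarrow> ('a set \<times> 'a) list \<Rightarrow> 'a \<Rightarrow> real" where
  "agent_loss L X i = (let t = (THE t. t < length X \<and> i \<in> fst (X!t)) in L i (fst (X!t)) (snd (X!t)))"

definition FJR :: "real \<Rightarrow> ('a \<Rightarrow> 'a set \<Rightarrow> 'a \<Rightarrow> real) \<Rightarrow> 'a set \<Rightarrow> 'a set \<Rightarrow> nat \<Rightarrow> ('a set \<times> 'a) list \<Rightarrow> bool" where
  "FJR \<alpha> L N M k X \<longleftrightarrow>
     \<not> (\<exists>S y. S \<subseteq> N \<and> real (card S) \<ge> real (card N) / real k \<and> y \<in> M \<and>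
            (\<forall>i\<in>S. \<alpha> * L i S y < Min (agent_loss L X ` S)))"

definition centroid_loss :: "('a \<Rightarrow> 'a \<Rightarrow> real) \<Rightarrow> 'a \<Rightarrow> 'a set \<Rightarrow> 'a \<Rightarrow> real" where
  "centroid_loss d i C x = d i x"

definition gc_valid :: "'a set \<Rightarrow> nat \<Rightarrow> ('a \<Rightarrow> 'a \<Rightarrow> real) \<Rightarrow> 'a set \<Rightarrow> real \<Rightarrow> 'a \<Rightarrow> 'a set \<Rightarrow> bool" where
  "gc_valid N k d U \<delta> i C \<longleftrightarrow>
     i \<in> U \<and> C \<subseteq> U \<and> real (card C) \<ge> min (real (card U)) (real (card N) / real k) \<and>
     (\<forall>i'\<in>C. d i i' \<le> \<delta>)"

text \<open>gc_run N M k d U \<delta> Xs: starting from uncaptured set U with current parameter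
  value \<delta>, GC (under some tie-breaking) may form exactly the clusters Xs (in order).
  Each step happens at the least \<delta>' \<ge> \<delta> at which a valid choice exists
  (\<delta> increases continuously); any valid choice and any closest center may be taken.\<close>
inductive gc_run :: "'a set \<Rightarrow> 'a set \<Rightarrow> nat \<Rightarrow> ('a \<Rightarrow> 'a \<Rightarrow> real) \<Rightarrow> 'a set \<Rightarrow> real \<Rightarrow> ('a set \<times> 'a) list \<Rightarrow> bool"
  for N M k d where
  gc_done: "gc_run N M k d {} \<delta> []"
| gc_step: "\<lbrakk> U \<noteq> {}; \<delta> \<le> \<delta>'; gc_valid N k d U \<delta>' i C;
             \<forall>\<delta>''. \<delta> \<le> \<delta>'' \<and> \<delta>'' < \<delta>' \<longrightarrow> \<not> (\<exists>j D. gc_valid N k d U \<delta>'' j D);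
             x \<in> M; \<forall>x'\<in>M. d i x \<le> d i x';
             gc_run N M k d (U - C) \<delta>' rest \<rbrakk>
           \<Longrightarrow> gc_run N M k d U \<delta> ((C, x) # rest)"

text \<open>Output of GC: the formed clusters, padded with empty clusters (center x0 \<in> M,
  irrelevant) to k clusters.\<close>
definition gc_output :: "nat \<Rightarrow> 'a \<Rightarrow> ('a set \<times> 'a) list \<Rightarrow> ('a set \<times> 'a) list" where
  "gc_output k x0 Xs = Xs @ replicate (k - length Xs) ({}, x0)"

end

theory Submission
  imports Defs
begin

text \<open>Suppose a group S with |S| \<ge> n/k and a center y block the clustering, and let
  r = max_{j \<in> S} d(j, y). Then S has diameter at most 2r, so as long as S is entirely
  uncaptured, any of its members together with S is a valid choice at threshold 2r; hence GC
  captures a first member j of S at some threshold \<delta> \<le> 2r, in a cluster anchored at some i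
  with d(i, j) \<le> \<delta>. The center x of that cluster is closest to i, so
  d(j, x) \<le> d(j, i) + d(i, y) \<le> 2 d(i, j) + d(j, y) \<le> 5r, contradicting the blocking condition
  for the member of S attaining r.\<close>

lemma closest_center_dist_le:
  assumes "pseudometric_on A d" "i \<in> A" "j \<in> A" "x \<in> A" "y \<in> A"
    and "d i x \<le> d i y"
  shows "d j x \<le> 2 * d i j + d j y"
proof -
  have "d j x \<le> d j i + d i x"
    using assms(1-4) unfolding pseudometric_on_def by blast
  also have "\<dots> \<le> d i j + d i y"
    using assms unfolding pseudometric_on_def by auto
  also have "d i y \<le> d i j + d j y"
    using assms(1-3,5) unfolding pseudometric_on_def by blast
  finally show ?thesis by simp
qed

lemma gc_run_Nil_iff_empty:
  assumes "gc_run N M k d U \<delta> Xs"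
  shows "Xs = [] \<longleftrightarrow> U = {}"
  using assms by cases auto

lemma gc_run_clusters_subset:
  assumes "gc_run N M k d U \<delta> Xs" "(C, x) \<in> set Xs"
  shows "C \<subseteq> U \<and> x \<in> M"
  using assms by induction (auto simp: gc_valid_def)

lemma gc_run_Union_clusters:
  assumes "gc_run N M k d U \<delta> Xs"
  shows "\<Union>(fst ` set Xs) = U"
  using assms by induction (auto simp: gc_valid_def)

lemma gc_run_clusters_disjoint:
  assumes "gc_run N M k d U \<delta> Xs"
  shows "sorted_wrt (\<lambda>p q. fst p \<inter> fst q = {}) Xs"
  using assms
proof induction
  case (gc_step U \<delta> \<delta>' i C x rest)
  then show ?case
    using gc_run_clusters_subset[OF gc_step.hyps(7)] by fastforce
qed simp

text \<open>Every cluster but the last one has at least n/k agents.\<close>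

lemma gc_run_length_bound:
  assumes "gc_run N M k d U \<delta> Xs" "finite U" "Xs \<noteq> []"
  shows "real (length Xs - 1) * (real (card N) / real k) < real (card U)"
  using assms
proof induction
  case (gc_step U \<delta> \<delta>' i C x rest)
  have "C \<subseteq> U" and C_large: "min (real (card U)) (real (card N) / real k) \<le> real (card C)"
    using gc_step.hyps(3) by (auto simp: gc_valid_def)
  show ?case
  proof (cases "rest = []")
    case True
    then show ?thesis using gc_step.hyps(1) gc_step.prems(1) by (simp add: card_gt_0_iff)
  next
    case False
    then have "C \<subset> U"
      using \<open>C \<subseteq> U\<close> gc_run_Nil_iff_empty[OF gc_step.hyps(7)] by blast
    then have "card C < card U"
      using gc_step.prems(1) by (simp add: psubset_card_mono)
    then have "real (card N) / real k \<le> real (card C)"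
      using C_large by linarith
    moreover have "card (U - C) = card U - card C"
      using \<open>C \<subseteq> U\<close> gc_step.prems(1) by (meson card_Diff_subset finite_subset)
    moreover have "real (length rest - 1) * (real (card N) / real k) < real (card (U - C))"
      using gc_step.IH[OF _ False] gc_step.prems(1) by simp
    moreover have "real (length rest) * (real (card N) / real k)
        = real (length rest - 1) * (real (card N) / real k) + real (card N) / real k"
    proof -
      have "real (length rest) = real (length rest - 1) + 1"
        using False by (simp add: Suc_leI of_nat_diff)
      then show ?thesis by (simp only: distrib_right mult_1)
    qed
    ultimately show ?thesis
      using \<open>card C < card U\<close> by (simp add: of_nat_diff)
  qed
qed simp

lemma gc_run_length_le:
  assumes "gc_run N M k d N \<delta> Xs" "finite N" "k > 0"
  shows "length Xs \<le> k"
proof (cases "Xs = []")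
  case False
  then have "N \<noteq> {}"
    using gc_run_Nil_iff_empty[OF assms(1)] by blast
  then have "0 < real (card N) / real k"
    using assms(2,3) by (simp add: card_gt_0_iff)
  moreover have "real (length Xs - 1) * (real (card N) / real k) < real k * (real (card N) / real k)"
    using gc_run_length_bound[OF assms(1,2) False] assms(3) by simp
  ultimately have "length Xs - 1 < k"
    by (simp only: mult_less_cancel_right_pos of_nat_less_iff)
  then show ?thesis by linarith
qed simp

lemma is_clustering_if_sorted_wrt_disjoint:
  assumes "length X = k" "sorted_wrt (\<lambda>p q. fst p \<inter> fst q = {}) X"
    and "\<Union>(fst ` set X) = N" "\<forall>p\<in>set X. snd p \<in> M"
  shows "is_clustering N M k X"
proof -
  have "fst (X!t) \<inter> fst (X!s) = {}" if "t < s" "s < k" for t s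
    using that sorted_wrt_nth_less[OF assms(2)] assms(1) by simp
  then have "fst (X!t) \<inter> fst (X!s) = {}" if "t \<noteq> s" "t < k" "s < k" for t s
    using that by (metis Int_commute linorder_neqE_nat)
  moreover have "(\<Union>t<length X. fst (X!t)) = \<Union>(fst ` set X)"
    by (auto simp: set_conv_nth)
  ultimately show ?thesis
    using assms unfolding is_clustering_def by auto
qed

lemma gc_output_is_clustering:
  assumes "gc_run N M k d N \<delta> Xs" "finite N" "k > 0" "x0 \<in> M"
  shows "is_clustering N M k (gc_output k x0 Xs)"
proof (rule is_clustering_if_sorted_wrt_disjoint)
  show "length (gc_output k x0 Xs) = k"
    using gc_run_length_le[OF assms(1-3)] by (simp add: gc_output_def)
  show "sorted_wrt (\<lambda>p q. fst p \<inter> fst q = {}) (gc_output k x0 Xs)"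
  proof -
    have "sorted_wrt (\<lambda>p q. fst p \<inter> fst q = {}) (replicate n ({}, x0))" for n
      by (induction n) auto
    then show ?thesis
      using gc_run_clusters_disjoint[OF assms(1)] by (simp add: gc_output_def sorted_wrt_append)
  qed
  show "\<Union>(fst ` set (gc_output k x0 Xs)) = N"
    using gc_run_Union_clusters[OF assms(1)] by (auto simp: gc_output_def)
  show "\<forall>p\<in>set (gc_output k x0 Xs). snd p \<in> M"
    using gc_run_clusters_subset[OF assms(1)] assms(4) by (auto simp: gc_output_def)
qed

lemma agent_loss_eq:
  assumes "is_clustering N M k X" "(C, x) \<in> set X" "i \<in> C"
  shows "agent_loss L X i = L i C x"
proof -
  obtain t where t: "t < length X" "X!t = (C, x)"
    using assms(2) by (auto simp: in_set_conv_nth)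
  have "(THE t. t < length X \<and> i \<in> fst (X!t)) = t"
  proof (rule the_equality)
    show "t < length X \<and> i \<in> fst (X!t)"
      using t assms(3) by simp
    fix t' assume "t' < length X \<and> i \<in> fst (X!t')"
    then show "t' = t"
      using assms(1,3) t unfolding is_clustering_def by (metis disjoint_iff fst_conv)
  qed
  then show ?thesis
    using t by (simp add: agent_loss_def)
qed

lemma FJR_centroid_lossI:
  assumes "finite N" "N \<noteq> {}" "k > 0"
    and close_member: "\<And>S y. \<lbrakk>S \<subseteq> N; S \<noteq> {}; real (card N) / real k \<le> real (card S); y \<in> M\<rbrakk>
      \<Longrightarrow> \<exists>i\<in>S. \<exists>j\<in>S. agent_loss (centroid_loss d) X i \<le> \<alpha> * d j y"
  shows "FJR \<alpha> (centroid_loss d) N M k X"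
  unfolding FJR_def
proof
  assume "\<exists>S y. S \<subseteq> N \<and> real (card N) / real k \<le> real (card S) \<and> y \<in> M \<and>
    (\<forall>i\<in>S. \<alpha> * centroid_loss d i S y < Min (agent_loss (centroid_loss d) X ` S))"
  then obtain S y where S: "S \<subseteq> N" "real (card N) / real k \<le> real (card S)" "y \<in> M"
    and blocking: "\<forall>j\<in>S. \<alpha> * d j y < Min (agent_loss (centroid_loss d) X ` S)"
    by (auto simp: centroid_loss_def)
  have "0 < real (card N) / real k"
    using assms(1-3) by (simp add: card_gt_0_iff)
  then have "S \<noteq> {}"
    using S(2) by auto
  then obtain i j where "i \<in> S" "j \<in> S" and close: "agent_loss (centroid_loss d) X i \<le> \<alpha> * d j y"
    using close_member S by blast
  have "finite S"
    using S(1) assms(1) finite_subset by blast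
  then have "Min (agent_loss (centroid_loss d) X ` S) \<le> agent_loss (centroid_loss d) X i"
    using \<open>i \<in> S\<close> by simp
  then show False
    using blocking \<open>j \<in> S\<close> close by fastforce
qed

text \<open>While S is uncaptured, (j, S) with j \<in> S is a valid choice at threshold \<rho>, so GC cannot
  move past \<rho> before capturing a member of S; the anchor of that cluster need not lie in S.\<close>

lemma gc_run_captures_cohesive_group:
  assumes "gc_run N M k d U \<delta> Xs"
    and "S \<subseteq> U" "S \<noteq> {}" "real (card N) / real k \<le> real (card S)"
    and "\<delta> \<le> \<rho>" "\<forall>j\<in>S. \<forall>j'\<in>S. d j j' \<le> \<rho>"
  shows "\<exists>(C, x)\<in>set Xs. \<exists>j\<in>S \<inter> C. \<exists>i\<in>U. d i j \<le> \<rho> \<and> (\<forall>x'\<in>M. d i x \<le> d i x')"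
  using assms
proof induction
  case (gc_step U \<delta> \<delta>' i C x rest)
  have "C \<subseteq> U" "i \<in> U" and anchored: "\<forall>j\<in>C. d i j \<le> \<delta>'"
    using gc_step.hyps(3) by (auto simp: gc_valid_def)
  have "\<delta>' \<le> \<rho>"
  proof (rule ccontr)
    assume "\<not> \<delta>' \<le> \<rho>"
    then have "\<not> (\<exists>j D. gc_valid N k d U \<rho> j D)"
      using gc_step.hyps(4) gc_step.prems(4) by simp
    moreover obtain j where "j \<in> S"
      using gc_step.prems(2) by blast
    then have "gc_valid N k d U \<rho> j S"
      using gc_step.prems by (auto simp: gc_valid_def)
    ultimately show False
      by blast
  qed
  show ?case
  proof (cases "S \<subseteq> U - C")
    case True
    then have "\<exists>(C', x')\<in>set rest. \<exists>j\<in>S \<inter> C'. \<exists>i'\<in>U - C.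
        d i' j \<le> \<rho> \<and> (\<forall>x''\<in>M. d i' x' \<le> d i' x'')"
      using gc_step.IH gc_step.prems(2,3,5) \<open>\<delta>' \<le> \<rho>\<close> by blast
    then show ?thesis
      by fastforce
  next
    case False
    then obtain j where "j \<in> S \<inter> C"
      using gc_step.prems(1) by blast
    moreover have "d i j \<le> \<rho>"
      using anchored \<open>\<delta>' \<le> \<rho>\<close> \<open>j \<in> S \<inter> C\<close> by fastforce
    ultimately show ?thesis
      using \<open>i \<in> U\<close> gc_step.hyps(6) by auto
  qed
qed simp

lemma gc_run_captures_member_within_5:
  assumes "gc_run N M k d N 0 Xs" "finite N" "pseudometric_on (N \<union> M) d"
    and "S \<subseteq> N" "S \<noteq> {}" "real (card N) / real k \<le> real (card S)" "y \<in> M"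
  shows "\<exists>(C, x)\<in>set Xs. \<exists>j\<in>S \<inter> C. \<exists>j'\<in>S. d j x \<le> 5 * d j' y"
proof -
  have "finite S"
    using assms(2,4) finite_subset by blast
  then have "(MAX j\<in>S. d j y) \<in> (\<lambda>j. d j y) ` S"
    using assms(5) by simp
  then obtain j' where "j' \<in> S" and "d j' y = (MAX j\<in>S. d j y)"
    by auto
  then have r_max: "\<forall>j\<in>S. d j y \<le> d j' y"
    using \<open>finite S\<close> by simp
  let ?r = "d j' y"
  have "y \<in> N \<union> M" "j' \<in> N \<union> M"
    using \<open>j' \<in> S\<close> assms(4,7) by auto
  then have "0 \<le> ?r"
    using assms(3) unfolding pseudometric_on_def by blast
  have diameter: "\<forall>j\<in>S. \<forall>j''\<in>S. d j j'' \<le> 2 * ?r"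
  proof (intro ballI)
    fix j j'' assume members: "j \<in> S" "j'' \<in> S"
    have "j \<in> N \<union> M" "j'' \<in> N \<union> M"
      using assms(4) members by auto
    then have "d j j'' \<le> d j y + d y j''" "d y j'' = d j'' y"
      using assms(3) \<open>y \<in> N \<union> M\<close> unfolding pseudometric_on_def by blast+
    moreover have "d j y \<le> ?r" "d j'' y \<le> ?r"
      using r_max members by auto
    ultimately show "d j j'' \<le> 2 * ?r"
      by linarith
  qed
  have "\<exists>(C, x)\<in>set Xs. \<exists>j\<in>S \<inter> C. \<exists>i\<in>N. d i j \<le> 2 * ?r \<and> (\<forall>x'\<in>M. d i x \<le> d i x')"
    using gc_run_captures_cohesive_group[OF assms(1,4-6) _ diameter] \<open>0 \<le> ?r\<close> by simp
  then obtain C x j i where Cx: "(C, x) \<in> set Xs" and "j \<in> S \<inter> C" "i \<in> N"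
    and "d i j \<le> 2 * ?r" and closest: "\<forall>x'\<in>M. d i x \<le> d i x'"
    by auto
  have "x \<in> M"
    using gc_run_clusters_subset[OF assms(1) Cx] by blast
  moreover have "j \<in> N"
    using \<open>j \<in> S \<inter> C\<close> assms(4) by blast
  moreover have "d i x \<le> d i y"
    using closest assms(7) by blast
  ultimately have "d j x \<le> 2 * d i j + d j y"
    using \<open>i \<in> N\<close> assms(7) by (intro closest_center_dist_le[OF assms(3)]) auto
  also have "\<dots> \<le> 5 * ?r"
    using \<open>d i j \<le> 2 * ?r\<close> r_max \<open>j \<in> S \<inter> C\<close> by auto
  finally show ?thesis
    using Cx \<open>j \<in> S \<inter> C\<close> \<open>j' \<in> S\<close> by auto
qed

theorem mainTheorem14:
  fixes N M :: "'a set" and k :: nat and d :: "'a \<Rightarrow> 'a \<Rightarrow> real"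
    and Xs :: "('a set \<times> 'a) list" and x0 :: 'a
  assumes "finite N" "N \<noteq> {}" "finite M" "M \<noteq> {}" "k > 0"
    and "pseudometric_on (N \<union> M) d"
    and "gc_run N M k d N 0 Xs"
    and "x0 \<in> M"
  shows "is_clustering N M k (gc_output k x0 Xs) \<and>
         FJR 5 (centroid_loss d) N M k (gc_output k x0 Xs)"
proof
  let ?X = "gc_output k x0 Xs"
  show clustering: "is_clustering N M k ?X"
    using gc_output_is_clustering[OF assms(7,1,5,8)] .
  show "FJR 5 (centroid_loss d) N M k ?X"
  proof (rule FJR_centroid_lossI[OF assms(1,2,5)])
    fix S y
    assume "S \<subseteq> N" "S \<noteq> {}" "real (card N) / real k \<le> real (card S)" "y \<in> M"
    then obtain C x j j' where "(C, x) \<in> set Xs" "j \<in> S \<inter> C" "j' \<in> S" "d j x \<le> 5 * d j' y"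
      using gc_run_captures_member_within_5[OF assms(7,1,6)] by blast
    moreover have "(C, x) \<in> set ?X"
      using \<open>(C, x) \<in> set Xs\<close> by (simp add: gc_output_def)
    then have "agent_loss (centroid_loss d) ?X j = d j x"
      using agent_loss_eq[OF clustering] \<open>j \<in> S \<inter> C\<close> by (simp add: centroid_loss_def)
    ultimately show "\<exists>i\<in>S. \<exists>j\<in>S. agent_loss (centroid_loss d) ?X i \<le> 5 * d j y"
      by (metis IntD1)
  qed
qed

end
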